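(* Let $Z=(W,A,X,V,E,S)\sim\mathbb{P}$, where only $(W,A,X)$ is observed. Suppose that for all $j\in\{1,\dots,J\}$: (i) $\mathbb{E}[W_j\mid A,X]=\mathbb{E}[V_jE_jS\mid A,X]$; (ii) $V_j$, $E_j$ and $S$ are mutually independent conditionally on $(A,X)$; (iii) $E_j$ is independent of $(A,X)$; and (iv) $S$ is independent of $(A,X)$. Then for every $j$ the parameter $$\Psi^{(2)}_j(\mathbb{P}):=\log\left(\frac{\mathbb{E}\big[\mathbb{E}[V_j\mid A=1,X]\big]}{\mathbb{E}\big[\mathbb{E}[V_j\mid A=0,X]\big]}\right)$$ is identifiable, where the outer expectations are over the marginal distribution of $X$.
   Context: $W\in\mathbb{R}_{\ge 0}^J$ are observed category levels, $A\in\{0,1\}$ a binary exposure, $X\in\mathcal{X}\subseteq\mathbb{R}^p$ covariates, $V\in\mathbb{R}_{\ge0}^J$ latent true category levels, $E\in\mathbb{R}_{>0}^J$ latent category-specific observabilities, $S\in\mathbb{R}_{>0}$ a latent sample-specific scale; data are i.i.d. from $\mathbb{P}$. The parameter is assumed well defined (numerator and denominator positive and finite). A parameter is identifiable if its value is uniquely determined by the distribution of the observed variables $(W,A,X)$ among distributions satisfying the assumptions. *)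

theory Defs
  imports "HOL-Probability.Probability"
begin

text \<open>The full (partly latent) data vector Z = (W, A, X, V, E, S) lives in the space
  (real^'J) (W) \<times> real (A, coded 0/1) \<times> (real^'p) (X) \<times> (real^'J) (V) \<times> (real^'J) (E) \<times> real (S),
  equipped with its Borel sigma-algebra.\<close>

definition zW :: "((real^'J) \<times> real \<times> (real^'p) \<times> (real^'J) \<times> (real^'J) \<times> real) \<Rightarrow> (real^'J)"
  where "zW z = fst z"
definition zA :: "((real^'J) \<times> real \<times> (real^'p) \<times> (real^'J) \<times> (real^'J) \<times> real) \<Rightarrow> real"
  where "zA z = fst (snd z)"
definition zX :: "((real^'J) \<times> real \<times> (real^'p) \<times> (real^'J) \<times> (real^'J) \<times> real) \<Rightarrow> (real^'p)"
  where "zX z = fst (snd (snd z))"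
definition zV :: "((real^'J) \<times> real \<times> (real^'p) \<times> (real^'J) \<times> (real^'J) \<times> real) \<Rightarrow> (real^'J)"
  where "zV z = fst (snd (snd (snd z)))"
definition zE :: "((real^'J) \<times> real \<times> (real^'p) \<times> (real^'J) \<times> (real^'J) \<times> real) \<Rightarrow> (real^'J)"
  where "zE z = fst (snd (snd (snd (snd z))))"
definition zS :: "((real^'J) \<times> real \<times> (real^'p) \<times> (real^'J) \<times> (real^'J) \<times> real) \<Rightarrow> real"
  where "zS z = snd (snd (snd (snd (snd z))))"

definition zObs :: "((real^'J) \<times> real \<times> (real^'p) \<times> (real^'J) \<times> (real^'J) \<times> real) \<Rightarrow> (real^'J) \<times> real \<times> (real^'p)"
  where "zObs z = (zW z, zA z, zX z)"

definition sigAX :: "((real^'J) \<times> real \<times> (real^'p) \<times> (real^'J) \<times> (real^'J) \<times> real) measure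
   \<Rightarrow> ((real^'J) \<times> real \<times> (real^'p) \<times> (real^'J) \<times> (real^'J) \<times> real) measure"
  where "sigAX P = vimage_algebra (space P) (\<lambda>z. (zA z, zX z)) borel"
definition sigX :: "((real^'J) \<times> real \<times> (real^'p) \<times> (real^'J) \<times> (real^'J) \<times> real) measure
   \<Rightarrow> ((real^'J) \<times> real \<times> (real^'p) \<times> (real^'J) \<times> (real^'J) \<times> real) measure"
  where "sigX P = vimage_algebra (space P) zX borel"

definition cond_indep3 :: "'a measure \<Rightarrow> 'a measure \<Rightarrow> ('a \<Rightarrow> real) \<Rightarrow> ('a \<Rightarrow> real) \<Rightarrow> ('a \<Rightarrow> real) \<Rightarrow> bool"
  where "cond_indep3 M F U1 U2 U3 \<longleftrightarrow>
    (\<forall>B1\<in>sets borel. \<forall>B2\<in>sets borel. \<forall>B3\<in>sets borel.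
      AE \<omega> in M. real_cond_exp M F (\<lambda>\<omega>. indicator B1 (U1 \<omega>) * indicator B2 (U2 \<omega>) * indicator B3 (U3 \<omega>)) \<omega>
        = real_cond_exp M F (\<lambda>\<omega>. indicator B1 (U1 \<omega>)) \<omega>
          * real_cond_exp M F (\<lambda>\<omega>. indicator B2 (U2 \<omega>)) \<omega>
          * real_cond_exp M F (\<lambda>\<omega>. indicator B3 (U3 \<omega>)) \<omega>)"

definition indep_rv :: "'a measure \<Rightarrow> ('a \<Rightarrow> 'b::topological_space) \<Rightarrow> ('a \<Rightarrow> 'c::topological_space) \<Rightarrow> bool"
  where "indep_rv M U Y \<longleftrightarrow>
    U \<in> borel_measurable M \<and> Y \<in> borel_measurable M \<and>
    prob_space.indep_set M {U -` B \<inter> space M | B. B \<in> sets borel} {Y -` B \<inter> space M | B. B \<in> sets borel}"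

text \<open>The regression E[V_j | A = a, X], as a function of the sample point (through X):
  E[V_j 1{A=a} | X] / P(A = a | X).\<close>
definition regV :: "((real^'J) \<times> real \<times> (real^'p) \<times> (real^'J) \<times> (real^'J) \<times> real) measure
   \<Rightarrow> 'J \<Rightarrow> real \<Rightarrow> ((real^'J) \<times> real \<times> (real^'p) \<times> (real^'J) \<times> (real^'J) \<times> real) \<Rightarrow> real"
  where "regV P j a z =
    real_cond_exp P (sigX P) (\<lambda>z. zV z $ j * indicator {z. zA z = a} z) z
    / real_cond_exp P (sigX P) (indicator {z. zA z = a}) z"

definition Psi2 :: "((real^'J) \<times> real \<times> (real^'p) \<times> (real^'J) \<times> (real^'J) \<times> real) measure \<Rightarrow> 'J \<Rightarrow> real"
  where "Psi2 P j = ln ((\<integral>z. regV P j 1 z \<partial>P) / (\<integral>z. regV P j 0 z \<partial>P))"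

definition Psi2_well_defined :: "((real^'J) \<times> real \<times> (real^'p) \<times> (real^'J) \<times> (real^'J) \<times> real) measure \<Rightarrow> 'J \<Rightarrow> bool"
  where "Psi2_well_defined P j \<longleftrightarrow>
    (\<forall>a\<in>{0,1}. integrable P (regV P j a) \<and> 0 < (\<integral>z. regV P j a z \<partial>P))"

text \<open>Integrability of W_j, V_j and V_j E_j S is assumed so
  that the conditional expectations in (i) are meaningful.\<close>
definition model :: "((real^'J) \<times> real \<times> (real^'p) \<times> (real^'J) \<times> (real^'J) \<times> real) measure \<Rightarrow> bool"
  where "model P \<longleftrightarrow>
    prob_space P \<and> sets P = sets borel \<and>
    (AE z in P. zA z \<in> {0, 1} \<and> 0 < zS z \<and>
       (\<forall>j. 0 \<le> zW z $ j \<and> 0 \<le> zV z $ j \<and> 0 < zE z $ j)) \<and>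
    (\<forall>j. integrable P (\<lambda>z. zW z $ j) \<and> integrable P (\<lambda>z. zV z $ j) \<and>
         integrable P (\<lambda>z. zV z $ j * zE z $ j * zS z) \<and>
      \<comment> \<open>(i)\<close>
      (AE z in P. real_cond_exp P (sigAX P) (\<lambda>z. zW z $ j) z
                 = real_cond_exp P (sigAX P) (\<lambda>z. zV z $ j * zE z $ j * zS z) z) \<and>
      \<comment> \<open>(ii)\<close>
      cond_indep3 P (sigAX P) (\<lambda>z. zV z $ j) (\<lambda>z. zE z $ j) zS \<and>
      \<comment> \<open>(iii)\<close>
      indep_rv P (\<lambda>z. zE z $ j) (\<lambda>z. (zA z, zX z))) \<and>
    \<comment> \<open>(iv)\<close>
    indep_rv P zS (\<lambda>z. (zA z, zX z))"

end

theory Submission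
  imports Defs
begin

(* For an event A of sigma(A, X), the conditional independence (ii) together with (iii) and (iv)
   factorises E[1_A V_j E_j S] = E[1_A V_j] E[E_j] E[S], and (i) turns the left-hand side into
   E[1_A W_j]. Hence E[V_j | A, X] = d E[W_j | A, X] for a constant d (d = 1 / (E[E_j] E[S]), or
   d = 0 when that product is infinite), so E[V_j | A = a, X] = d E[W_j | A = a, X], and the
   right-hand regression is a functional of the law of (W, A, X) alone. The constant d cancels
   in the ratio defining Psi^(2)_j; it is nonzero because that ratio is well defined. *)

lemma nn_integral_weighted_comp_eqI:
  fixes k :: "'a \<Rightarrow> ennreal" and k' :: "'b \<Rightarrow> ennreal"
  assumes [measurable]: "k \<in> borel_measurable M" "k' \<in> borel_measurable M'"
    "Y \<in> measurable M N" "Y' \<in> measurable M' N" "h \<in> borel_measurable N"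
    and indicator_eq: "\<And>B. B \<in> sets N \<Longrightarrow>
      (\<integral>\<^sup>+z. k z * indicator B (Y z) \<partial>M) = c * (\<integral>\<^sup>+z. k' z * indicator B (Y' z) \<partial>M')"
  shows "(\<integral>\<^sup>+z. k z * h (Y z) \<partial>M) = c * (\<integral>\<^sup>+z. k' z * h (Y' z) \<partial>M')"
proof -
  have indicator_comp: "indicator (T -` B \<inter> space L) z = (indicator B (T z) :: ennreal)"
    if "z \<in> space L" for T :: "_ \<Rightarrow> 'c" and L B z
    using that by (simp split: split_indicator)
  have law_eq: "distr (density M k) N Y = scale_measure c (distr (density M' k') N Y')"
  proof (rule measure_eqI)
    fix B assume "B \<in> sets (distr (density M k) N Y)"
    then have [measurable]: "B \<in> sets N" by simp
    show "emeasure (distr (density M k) N Y) B = emeasure (scale_measure c (distr (density M' k') N Y')) B"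
      by (simp add: emeasure_distr emeasure_density indicator_eq indicator_comp cong: nn_integral_cong)
  qed simp
  have "(\<integral>\<^sup>+z. k z * h (Y z) \<partial>M) = (\<integral>\<^sup>+y. h y \<partial>distr (density M k) N Y)"
    by (simp add: nn_integral_distr nn_integral_density)
  also have "\<dots> = c * (\<integral>\<^sup>+y. h y \<partial>distr (density M' k') N Y')"
    by (simp add: law_eq nn_integral_scale_measure)
  also have "\<dots> = c * (\<integral>\<^sup>+z. k' z * h (Y' z) \<partial>M')"
    by (simp add: nn_integral_distr nn_integral_density)
  finally show ?thesis .
qed

lemma sigma_finite_subalgebra_vimage_algebra:
  assumes "finite_measure M" "g \<in> measurable M N"
  shows "sigma_finite_subalgebra M (vimage_algebra (space M) g N)"
proof (rule finite_measure_subalgebra_is_sigma_finite)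
  interpret finite_measure M by fact
  show "finite_measure_subalgebra M (vimage_algebra (space M) g N)"
    using measurable_iff_sets[THEN iffD1, OF assms(2)]
    by unfold_locales (simp add: subalgebra_def)
qed

lemma (in prob_space) real_cond_exp_indicator_indep:
  assumes "sigma_finite_subalgebra M F" and [measurable]: "U \<in> measurable M N" "B \<in> sets N"
    and indep: "indep_set {U -` B \<inter> space M | B. B \<in> sets N} (sets F)"
  shows "AE x in M. real_cond_exp M F (\<lambda>x. indicator B (U x)) x = expectation (\<lambda>x. indicator B (U x))"
proof -
  interpret sigma_finite_subalgebra M F by fact
  have set_integral_indicator: "(\<integral>x\<in>D. indicat_real B (U x) \<partial>M) = prob (D \<inter> (U -` B \<inter> space M))"
    if "D \<in> events" for D
  proof -
    have "(\<integral>x\<in>D. indicat_real B (U x) \<partial>M) = (\<integral>x. indicator (D \<inter> (U -` B \<inter> space M)) x \<partial>M)"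
      unfolding set_lebesgue_integral_def
      by (rule Bochner_Integration.integral_cong) (auto split: split_indicator)
    then show ?thesis
      using sets.sets_into_space[OF that] by (simp add: Int_assoc Int_absorb2)
  qed
  have mean: "expectation (\<lambda>x. indicator B (U x)) = prob (U -` B \<inter> space M)"
    using set_integral_indicator[of "space M"]
    by (simp add: set_integral_space integrable_const_bound[where B=1])
  show ?thesis
  proof (rule real_cond_exp_charact)
    fix A assume A: "A \<in> sets F"
    then have A_event: "A \<in> events"
      using subalg by (auto simp: subalgebra_def)
    have "U -` B \<inter> space M \<in> {U -` B \<inter> space M | B. B \<in> sets N}"
      using \<open>B \<in> sets N\<close> by blast
    from indep_setD[OF indep this A]
    have "prob (A \<inter> (U -` B \<inter> space M)) = prob A * prob (U -` B \<inter> space M)"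
      by (simp add: Int_commute mult.commute)
    then show "(\<integral>x\<in>A. indicat_real B (U x) \<partial>M) = (\<integral>x\<in>A. expectation (\<lambda>x. indicat_real B (U x)) \<partial>M)"
      by (simp add: set_integral_indicator[OF A_event] mean set_integral_const[OF A_event])
  qed (auto intro!: integrable_const_bound[where B=1])
qed

lemma (in prob_space) integral_cond_indep3_indicator:
  assumes "sigma_finite_subalgebra M F"
    and [measurable]: "V \<in> borel_measurable M" "E \<in> borel_measurable M" "S \<in> borel_measurable M"
    and cond_indep: "cond_indep3 M F V E S"
    and indep_E: "indep_set {E -` B \<inter> space M | B. B \<in> sets borel} (sets F)"
    and indep_S: "indep_set {S -` B \<inter> space M | B. B \<in> sets borel} (sets F)"
    and [measurable]: "A \<in> sets F" "B1 \<in> sets borel" "B2 \<in> sets borel" "B3 \<in> sets borel"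
  shows "(\<integral>z. indicat_real A z * (indicat_real B1 (V z) * indicat_real B2 (E z) * indicat_real B3 (S z)) \<partial>M)
    = expectation (\<lambda>z. indicat_real B2 (E z)) * expectation (\<lambda>z. indicat_real B3 (S z))
      * (\<integral>z. indicat_real A z * indicat_real B1 (V z) \<partial>M)"
proof -
  interpret sigma_finite_subalgebra M F by fact
  have [measurable]: "A \<in> events"
    using subalg \<open>A \<in> sets F\<close> by (auto simp: subalgebra_def)
  define p2 where "p2 = expectation (\<lambda>z. indicat_real B2 (E z))"
  define p3 where "p3 = expectation (\<lambda>z. indicat_real B3 (S z))"
  define cond_V where "cond_V = real_cond_exp M F (\<lambda>z. indicator B1 (V z))"
  have "AE z in M. real_cond_exp M F (\<lambda>z. indicator B2 (E z)) z = p2"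
    unfolding p2_def by (rule real_cond_exp_indicator_indep) (fact | simp)+
  moreover have "AE z in M. real_cond_exp M F (\<lambda>z. indicator B3 (S z)) z = p3"
    unfolding p3_def by (rule real_cond_exp_indicator_indep) (fact | simp)+
  moreover have "AE z in M. real_cond_exp M F (\<lambda>z. indicator B1 (V z) * indicator B2 (E z) * indicator B3 (S z)) z
        = cond_V z * real_cond_exp M F (\<lambda>z. indicator B2 (E z)) z
          * real_cond_exp M F (\<lambda>z. indicator B3 (S z)) z"
    using cond_indep unfolding cond_indep3_def cond_V_def by auto
  ultimately have cond_prod: "AE z in M.
      indicator A z * real_cond_exp M F (\<lambda>z. indicator B1 (V z) * indicator B2 (E z) * indicator B3 (S z)) z
      = p2 * p3 * (indicator A z * cond_V z)"
    by eventually_elim simp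
  have "(\<integral>z. indicator A z * (indicator B1 (V z) * indicator B2 (E z) * indicator B3 (S z)) \<partial>M)
      = (\<integral>z. indicator A z * real_cond_exp M F (\<lambda>z. indicator B1 (V z) * indicator B2 (E z) * indicator B3 (S z)) z \<partial>M)"
    by (rule real_cond_exp_intg(2)[symmetric])
      (auto intro!: integrable_const_bound[where B=1] split: split_indicator)
  also have "\<dots> = (\<integral>z. p2 * p3 * (indicator A z * cond_V z) \<partial>M)"
    using cond_prod by (intro integral_cong_AE) (simp_all add: cond_V_def)
  also have "\<dots> = p2 * p3 * (\<integral>z. indicator A z * cond_V z \<partial>M)"
    by simp
  also have "(\<integral>z. indicator A z * cond_V z \<partial>M) = (\<integral>z. indicator A z * indicator B1 (V z) \<partial>M)"
    unfolding cond_V_def by (rule real_cond_exp_intg(2))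
      (auto intro!: integrable_const_bound[where B=1] split: split_indicator)
  finally show ?thesis
    by (simp add: p2_def p3_def)
qed

lemma (in prob_space) nn_integral_cond_indep3_indicator:
  assumes "sigma_finite_subalgebra M F"
    and [measurable]: "V \<in> borel_measurable M" "E \<in> borel_measurable M" "S \<in> borel_measurable M"
    and "cond_indep3 M F V E S"
    and "indep_set {E -` B \<inter> space M | B. B \<in> sets borel} (sets F)"
    and "indep_set {S -` B \<inter> space M | B. B \<in> sets borel} (sets F)"
    and A: "A \<in> sets F" and [measurable]: "B1 \<in> sets borel" "B2 \<in> sets borel" "B3 \<in> sets borel"
  shows "(\<integral>\<^sup>+z. indicator A z * indicator B1 (V z) * indicator B2 (E z) * indicator B3 (S z) \<partial>M)
    = (\<integral>\<^sup>+z. indicator A z * indicator B1 (V z) \<partial>M) * (\<integral>\<^sup>+z. indicator B2 (E z) \<partial>M)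
      * (\<integral>\<^sup>+z. indicator B3 (S z) \<partial>M)"
proof -
  interpret sigma_finite_subalgebra M F by fact
  have [measurable]: "A \<in> events"
    using subalg A by (auto simp: subalgebra_def)
  have nn_integral_01: "(\<integral>\<^sup>+z. ennreal (g z) \<partial>M) = ennreal (\<integral>z. g z \<partial>M)"
    if "g \<in> borel_measurable M" "\<And>z. g z \<in> {0..1}" for g
    using that by (intro nn_integral_eq_integral integrable_const_bound[where B=1]) (auto simp: abs_le_iff)
  have "(\<integral>\<^sup>+z. indicator A z * indicator B1 (V z) * indicator B2 (E z) * indicator B3 (S z) \<partial>M)
      = ennreal (\<integral>z. indicator A z * (indicator B1 (V z) * indicator B2 (E z) * indicator B3 (S z)) \<partial>M)"
    "(\<integral>\<^sup>+z. indicator A z * indicator B1 (V z) \<partial>M) = ennreal (\<integral>z. indicator A z * indicator B1 (V z) \<partial>M)"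
    "(\<integral>\<^sup>+z. indicator B2 (E z) \<partial>M) = ennreal (expectation (\<lambda>z. indicator B2 (E z)))"
    "(\<integral>\<^sup>+z. indicator B3 (S z) \<partial>M) = ennreal (expectation (\<lambda>z. indicator B3 (S z)))"
    by (subst nn_integral_01[symmetric]; auto intro!: nn_integral_cong split: split_indicator)+
  moreover have "0 \<le> expectation (\<lambda>z. indicat_real B2 (E z))" "0 \<le> expectation (\<lambda>z. indicat_real B3 (S z))"
    "0 \<le> (\<integral>z. indicat_real A z * indicat_real B1 (V z) \<partial>M)"
    by simp_all
  ultimately show ?thesis
    unfolding integral_cond_indep3_indicator[OF assms] by (simp add: ennreal_mult mult_ac)
qed

lemma (in prob_space) nn_integral_cond_indep3_indicator_mult:
  assumes "sigma_finite_subalgebra M F"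
    and [measurable]: "V \<in> borel_measurable M" "E \<in> borel_measurable M" "S \<in> borel_measurable M"
    and "cond_indep3 M F V E S"
    and "indep_set {E -` B \<inter> space M | B. B \<in> sets borel} (sets F)"
    and "indep_set {S -` B \<inter> space M | B. B \<in> sets borel} (sets F)"
    and A: "A \<in> sets F" and [measurable]: "B1 \<in> sets borel"
  shows "(\<integral>\<^sup>+z. indicator A z * indicator B1 (V z) * ennreal (E z) * ennreal (S z) \<partial>M)
    = (\<integral>\<^sup>+z. indicator A z * indicator B1 (V z) \<partial>M) * (\<integral>\<^sup>+z. ennreal (E z) \<partial>M) * (\<integral>\<^sup>+z. ennreal (S z) \<partial>M)"
proof -
  interpret sigma_finite_subalgebra M F by fact
  have [measurable]: "A \<in> events"
    using subalg A by (auto simp: subalgebra_def)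
  have factor_S: "(\<integral>\<^sup>+z. indicator A z * indicator B1 (V z) * indicator B2 (E z) * ennreal (S z) \<partial>M)
    = (\<integral>\<^sup>+z. indicator A z * indicator B1 (V z) \<partial>M) * (\<integral>\<^sup>+z. indicator B2 (E z) \<partial>M) * (\<integral>\<^sup>+z. ennreal (S z) \<partial>M)"
    if [measurable]: "B2 \<in> sets borel" for B2
  proof -
    have "(\<integral>\<^sup>+z. indicator A z * indicator B1 (V z) * indicator B2 (E z) * ennreal (S z) \<partial>M)
      = ((\<integral>\<^sup>+z. indicator A z * indicator B1 (V z) \<partial>M) * (\<integral>\<^sup>+z. indicator B2 (E z) \<partial>M))
        * (\<integral>\<^sup>+z. 1 * ennreal (S z) \<partial>M)"
      by (rule nn_integral_weighted_comp_eqI[where Y=S and Y'=S and h=ennreal and N=borel])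
        (simp_all add: nn_integral_cond_indep3_indicator[OF assms])
    then show ?thesis by simp
  qed
  have "(\<integral>\<^sup>+z. (indicator A z * indicator B1 (V z) * ennreal (S z)) * ennreal (E z) \<partial>M)
    = ((\<integral>\<^sup>+z. indicator A z * indicator B1 (V z) \<partial>M) * (\<integral>\<^sup>+z. ennreal (S z) \<partial>M))
      * (\<integral>\<^sup>+z. 1 * ennreal (E z) \<partial>M)"
  proof (rule nn_integral_weighted_comp_eqI[where Y=E and Y'=E and h=ennreal and N=borel])
    fix B :: "real set" assume "B \<in> sets borel"
    from factor_S[OF this]
    show "(\<integral>\<^sup>+z. (indicator A z * indicator B1 (V z) * ennreal (S z)) * indicator B (E z) \<partial>M)
      = ((\<integral>\<^sup>+z. indicator A z * indicator B1 (V z) \<partial>M) * (\<integral>\<^sup>+z. ennreal (S z) \<partial>M))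
        * (\<integral>\<^sup>+z. 1 * indicator B (E z) \<partial>M)"
      by (simp add: mult_ac)
  qed simp_all
  then show ?thesis by (simp add: mult_ac)
qed

lemma (in prob_space) nn_integral_cond_indep3_mult:
  assumes "sigma_finite_subalgebra M F"
    and [measurable]: "V \<in> borel_measurable M" "E \<in> borel_measurable M" "S \<in> borel_measurable M"
    and "cond_indep3 M F V E S"
    and "indep_set {E -` B \<inter> space M | B. B \<in> sets borel} (sets F)"
    and "indep_set {S -` B \<inter> space M | B. B \<in> sets borel} (sets F)"
    and A: "A \<in> sets F"
  shows "(\<integral>\<^sup>+z. indicator A z * ennreal (V z) * ennreal (E z) * ennreal (S z) \<partial>M)
    = (\<integral>\<^sup>+z. indicator A z * ennreal (V z) \<partial>M) * (\<integral>\<^sup>+z. ennreal (E z) \<partial>M) * (\<integral>\<^sup>+z. ennreal (S z) \<partial>M)"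
proof -
  interpret sigma_finite_subalgebra M F by fact
  have [measurable]: "A \<in> events"
    using subalg A by (auto simp: subalgebra_def)
  have "(\<integral>\<^sup>+z. (indicator A z * ennreal (E z) * ennreal (S z)) * ennreal (V z) \<partial>M)
    = ((\<integral>\<^sup>+z. ennreal (E z) \<partial>M) * (\<integral>\<^sup>+z. ennreal (S z) \<partial>M)) * (\<integral>\<^sup>+z. indicator A z * ennreal (V z) \<partial>M)"
  proof (rule nn_integral_weighted_comp_eqI[where Y=V and Y'=V and h=ennreal and N=borel])
    fix B :: "real set" assume "B \<in> sets borel"
    from nn_integral_cond_indep3_indicator_mult[OF assms this]
    show "(\<integral>\<^sup>+z. (indicator A z * ennreal (E z) * ennreal (S z)) * indicator B (V z) \<partial>M)
      = ((\<integral>\<^sup>+z. ennreal (E z) \<partial>M) * (\<integral>\<^sup>+z. ennreal (S z) \<partial>M)) * (\<integral>\<^sup>+z. indicator A z * indicator B (V z) \<partial>M)"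
      by (simp add: mult_ac)
  qed simp_all
  then show ?thesis by (simp add: mult_ac)
qed

lemma ennreal_eq_mult_const_imp_proportional:
  fixes v w :: "'i \<Rightarrow> real" and c :: ennreal
  assumes "c \<noteq> 0" and eq: "\<And>i. i \<in> I \<Longrightarrow> ennreal (w i) = ennreal (v i) * c"
    and nonneg: "\<And>i. 0 \<le> v i" "\<And>i. 0 \<le> w i"
  obtains d where "\<And>i. i \<in> I \<Longrightarrow> v i = d * w i"
proof (cases "c = \<infinity>")
  case True
  show ?thesis
  proof (rule that[of 0])
    fix i assume "i \<in> I"
    from eq[OF this] True have "ennreal (v i) = 0"
      by (auto simp: ennreal_mult_top split: if_splits)
    then show "v i = 0 * w i"
      using nonneg(1)[of i] by simp
  qed
next
  case False
  define r where "r = enn2real c"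
  have "c = ennreal r" "0 < r"
    using False \<open>c \<noteq> 0\<close> by (auto simp: r_def enn2real_positive_iff less_top zero_less_iff_neq_zero)
  show ?thesis
  proof (rule that[of "1 / r"])
    fix i assume "i \<in> I"
    from eq[OF this] have "w i = v i * r"
      using nonneg[of i] \<open>c = ennreal r\<close> \<open>0 < r\<close> by (simp flip: ennreal_mult)
    then show "v i = 1 / r * w i"
      using \<open>0 < r\<close> by simp
  qed
qed

lemma (in prob_space) nn_integral_neq_0_AE_pos:
  fixes f :: "'a \<Rightarrow> real"
  assumes "AE x in M. 0 < f x" and [measurable]: "f \<in> borel_measurable M"
  shows "(\<integral>\<^sup>+x. f x \<partial>M) \<noteq> 0"
proof
  assume "(\<integral>\<^sup>+x. f x \<partial>M) = 0"
  then have "AE x in M. ennreal (f x) = 0"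
    by (simp add: nn_integral_0_iff_AE)
  with assms(1) have "AE x in M. False"
    by eventually_elim simp
  then show False
    by simp
qed

lemma (in sigma_finite_subalgebra) real_cond_exp_eq_cmult:
  assumes "integrable M f" "integrable M g"
    and set_integrals: "\<And>A. A \<in> sets F \<Longrightarrow> (\<integral>x\<in>A. f x \<partial>M) = d * (\<integral>x\<in>A. g x \<partial>M)"
  shows "AE x in M. real_cond_exp M F f x = d * real_cond_exp M F g x"
proof (rule real_cond_exp_charact)
  fix A assume "A \<in> sets F"
  then show "(\<integral>x\<in>A. f x \<partial>M) = (\<integral>x\<in>A. d * real_cond_exp M F g x \<partial>M)"
    using set_integrals real_cond_exp_intA[OF assms(2)] by (simp add: set_integral_mult_right)
qed (use assms(1,2) in auto)

lemma set_integral_distr_vimage: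
  fixes f :: "'b \<Rightarrow> 'c::{banach, second_countable_topology}"
  assumes [measurable]: "T \<in> measurable M N" "f \<in> borel_measurable N" "D \<in> sets N"
  shows "(\<integral>x\<in>T -` D \<inter> space M. f (T x) \<partial>M) = (\<integral>y\<in>D. f y \<partial>distr M N T)"
proof -
  have "(\<integral>x\<in>T -` D \<inter> space M. f (T x) \<partial>M) = (\<integral>x. indicator D (T x) *\<^sub>R f (T x) \<partial>M)"
    unfolding set_lebesgue_integral_def
    by (rule Bochner_Integration.integral_cong) (auto split: split_indicator)
  also have "\<dots> = (\<integral>y\<in>D. f y \<partial>distr M N T)"
    unfolding set_lebesgue_integral_def by (rule integral_distr[symmetric]) simp_all
  finally show ?thesis .
qed

lemma measurable_vimage_algebra_comp:
  assumes "T \<in> measurable M N" "g \<in> measurable N G"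
  shows "T \<in> measurable (vimage_algebra (space M) (\<lambda>x. g (T x)) G) (vimage_algebra (space N) g G)"
proof (rule measurable_vimage_algebra2)
  show "T \<in> space (vimage_algebra (space M) (\<lambda>x. g (T x)) G) \<rightarrow> space N"
    using measurable_space[OF assms(1)] by auto
  show "(\<lambda>x. g (T x)) \<in> measurable (vimage_algebra (space M) (\<lambda>x. g (T x)) G) G"
    by (rule measurable_vimage_algebra1)
      (auto intro: measurable_space[OF assms(1)] measurable_space[OF assms(2)])
qed

lemma real_cond_exp_distr:
  fixes f :: "'b \<Rightarrow> real"
  assumes M: "finite_measure M" and [measurable]: "T \<in> measurable M N" "g \<in> measurable N G" "f \<in> borel_measurable N"
    and f_integrable: "integrable (distr M N T) f"
  shows "AE x in M. real_cond_exp M (vimage_algebra (space M) (\<lambda>x. g (T x)) G) (\<lambda>x. f (T x)) x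
      = real_cond_exp (distr M N T) (vimage_algebra (space N) g G) f (T x)"
proof -
  define Q where "Q = distr M N T"
  define FM where "FM = vimage_algebra (space M) (\<lambda>x. g (T x)) G"
  define FQ where "FQ = vimage_algebra (space N) g G"
  define cond_Q where "cond_Q = real_cond_exp Q FQ f"
  interpret FM: sigma_finite_subalgebra M FM
    unfolding FM_def by (rule sigma_finite_subalgebra_vimage_algebra[OF M]) measurable
  have "finite_measure Q" "g \<in> measurable Q G"
    unfolding Q_def by (simp_all add: finite_measure.finite_measure_distr[OF M])
  then interpret FQ: sigma_finite_subalgebra Q FQ
    unfolding FQ_def by (metis sigma_finite_subalgebra_vimage_algebra Q_def space_distr)
  have [measurable]: "cond_Q \<in> borel_measurable N"
    using borel_measurable_cond_exp2[of Q FQ f] unfolding cond_Q_def Q_def measurable_distr_eq1 .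
  have "integrable Q cond_Q"
    unfolding cond_Q_def using f_integrable unfolding Q_def[symmetric] by (rule FQ.real_cond_exp_int(1))
  show ?thesis
    unfolding FM_def[symmetric] FQ_def[symmetric] Q_def[symmetric] cond_Q_def[symmetric]
  proof (rule FM.real_cond_exp_charact)
    fix A assume "A \<in> sets FM"
    then obtain C where C: "C \<in> sets G" and "A = (\<lambda>x. g (T x)) -` C \<inter> space M"
      unfolding FM_def by (subst (asm) sets_vimage_algebra2) (auto intro: measurable_space)
    define D where "D = g -` C \<inter> space N"
    have A: "A = T -` D \<inter> space M"
      using \<open>A = _\<close> measurable_space[OF \<open>T \<in> measurable M N\<close>] by (auto simp: D_def)
    have [measurable]: "D \<in> sets N" and "D \<in> sets FQ"
      using C unfolding D_def FQ_def by (auto intro: in_vimage_algebra)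
    have "(\<integral>x\<in>A. f (T x) \<partial>M) = (\<integral>y\<in>D. f y \<partial>Q)"
      unfolding A Q_def by (rule set_integral_distr_vimage) simp_all
    also have "\<dots> = (\<integral>y\<in>D. cond_Q y \<partial>Q)"
      unfolding cond_Q_def using f_integrable[folded Q_def] \<open>D \<in> sets FQ\<close> by (rule FQ.real_cond_exp_intA)
    also have "\<dots> = (\<integral>x\<in>A. cond_Q (T x) \<partial>M)"
      unfolding A Q_def by (rule set_integral_distr_vimage[symmetric]) simp_all
    finally show "(\<integral>x\<in>A. f (T x) \<partial>M) = (\<integral>x\<in>A. cond_Q (T x) \<partial>M)" .
  next
    show "integrable M (\<lambda>x. f (T x))"
      using f_integrable by (simp add: integrable_distr_eq)
    show "integrable M (\<lambda>x. cond_Q (T x))"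
      using \<open>integrable Q cond_Q\<close> by (simp add: Q_def integrable_distr_eq)
    show "(\<lambda>x. cond_Q (T x)) \<in> borel_measurable FM"
      unfolding cond_Q_def FM_def FQ_def
      by (rule measurable_compose[OF measurable_vimage_algebra_comp borel_measurable_cond_exp]) simp_all
  qed
qed

type_synonym ('J, 'p) sample = "(real^'J) \<times> real \<times> (real^'p) \<times> (real^'J) \<times> (real^'J) \<times> real"
type_synonym ('J, 'p) observed = "(real^'J) \<times> real \<times> (real^'p)"

lemma measurable_sample_coordinates [measurable]:
  "(\<lambda>z. zW z $ j) \<in> borel_measurable (borel :: ('J::finite, 'p::finite) sample measure)"
  "(\<lambda>z. zV z $ j) \<in> borel_measurable (borel :: ('J, 'p) sample measure)"
  "(\<lambda>z. zE z $ j) \<in> borel_measurable (borel :: ('J, 'p) sample measure)"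
  "zS \<in> borel_measurable (borel :: ('J, 'p) sample measure)"
  "zA \<in> borel_measurable (borel :: ('J, 'p) sample measure)"
  "zX \<in> borel_measurable (borel :: ('J, 'p) sample measure)"
  "zObs \<in> borel_measurable (borel :: ('J, 'p) sample measure)"
  unfolding zObs_def zW_def zA_def zX_def zV_def zE_def zS_def
  by (intro borel_measurable_continuous_onI continuous_intros)+

lemma measurable_observed_coordinates [measurable]:
  "(\<lambda>y. fst y $ j) \<in> borel_measurable (borel :: ('J::finite, 'p::finite) observed measure)"
  "(\<lambda>y. fst (snd y)) \<in> borel_measurable (borel :: ('J, 'p) observed measure)"
  "(\<lambda>y. snd (snd y)) \<in> borel_measurable (borel :: ('J, 'p) observed measure)"
  by (intro borel_measurable_continuous_onI continuous_intros)+

lemma sets_sigAX: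
  "sets (sigAX P) = {(\<lambda>z. (zA z, zX z)) -` C \<inter> space P | C. C \<in> sets borel}"
  unfolding sigAX_def by (rule sets_vimage_algebra2) auto

lemma model_sigma_finite_sigAX:
  fixes P :: "('J::finite, 'p::finite) sample measure"
  assumes "model P"
  shows "sigma_finite_subalgebra P (sigAX P)"
proof -
  have [measurable_cong]: "sets P = sets borel" and "finite_measure P"
    using assms by (auto simp: model_def prob_space.finite_measure)
  then show ?thesis
    unfolding sigAX_def by (intro sigma_finite_subalgebra_vimage_algebra) simp_all
qed

lemma model_set_integral_W_eq_VES:
  fixes P :: "('J::finite, 'p::finite) sample measure"
  assumes "model P" and A: "A \<in> sets (sigAX P)"
  shows "(\<integral>z\<in>A. zW z $ j \<partial>P) = (\<integral>z\<in>A. zV z $ j * zE z $ j * zS z \<partial>P)"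
proof -
  have W_integrable: "integrable P (\<lambda>z. zW z $ j)"
    and VES_integrable: "integrable P (\<lambda>z. zV z $ j * zE z $ j * zS z)"
    and cond_W: "AE z in P. real_cond_exp P (sigAX P) (\<lambda>z. zW z $ j) z
        = real_cond_exp P (sigAX P) (\<lambda>z. zV z $ j * zE z $ j * zS z) z"
    and [measurable_cong]: "sets P = sets borel"
    using assms(1) unfolding model_def by auto
  interpret sigma_finite_subalgebra P "sigAX P"
    using model_sigma_finite_sigAX[OF assms(1)] .
  have "A \<in> sets P"
    using A subalg by (auto simp: subalgebra_def)
  have "(\<integral>z\<in>A. zW z $ j \<partial>P) = (\<integral>z\<in>A. real_cond_exp P (sigAX P) (\<lambda>z. zW z $ j) z \<partial>P)"
    using W_integrable A by (rule real_cond_exp_intA)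
  also have "\<dots> = (\<integral>z\<in>A. real_cond_exp P (sigAX P) (\<lambda>z. zV z $ j * zE z $ j * zS z) z \<partial>P)"
    using cond_W \<open>A \<in> sets P\<close> by (intro set_lebesgue_integral_cong_AE) auto
  also have "\<dots> = (\<integral>z\<in>A. zV z $ j * zE z $ j * zS z \<partial>P)"
    using VES_integrable A by (rule real_cond_exp_intA[symmetric])
  finally show ?thesis .
qed

lemma model_set_integral_W_factor:
  fixes P :: "('J::finite, 'p::finite) sample measure"
  assumes "model P" and A: "A \<in> sets (sigAX P)"
  shows "ennreal (\<integral>z\<in>A. zW z $ j \<partial>P)
    = ennreal (\<integral>z\<in>A. zV z $ j \<partial>P) * ((\<integral>\<^sup>+z. zE z $ j \<partial>P) * (\<integral>\<^sup>+z. zS z \<partial>P))"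
proof -
  have [measurable_cong]: "sets P = sets borel" and "prob_space P"
    and nonneg: "AE z in P. 0 < zS z \<and> 0 \<le> zV z $ j \<and> 0 < zE z $ j"
    and V_integrable: "integrable P (\<lambda>z. zV z $ j)"
    and VES_integrable: "integrable P (\<lambda>z. zV z $ j * zE z $ j * zS z)"
    and cond_indep: "cond_indep3 P (sigAX P) (\<lambda>z. zV z $ j) (\<lambda>z. zE z $ j) zS"
    and indep_E: "indep_rv P (\<lambda>z. zE z $ j) (\<lambda>z. (zA z, zX z))"
    and indep_S: "indep_rv P zS (\<lambda>z. (zA z, zX z))"
    using assms(1) unfolding model_def by (auto elim: AE_mp)
  interpret prob_space P by fact
  interpret sigma_finite_subalgebra P "sigAX P"
    using model_sigma_finite_sigAX[OF assms(1)] .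
  have [measurable]: "A \<in> sets P"
    using A subalg by (auto simp: subalgebra_def)
  have "indep_set {(\<lambda>z. zE z $ j) -` B \<inter> space P | B. B \<in> sets borel} (sets (sigAX P))"
    "indep_set {zS -` B \<inter> space P | B. B \<in> sets borel} (sets (sigAX P))"
    using indep_E indep_S by (simp_all add: indep_rv_def sets_sigAX)
  note factor = nn_integral_cond_indep3_mult[OF model_sigma_finite_sigAX[OF assms(1)] _ _ _ cond_indep this A]
  have "AE z\<in>A in P. 0 \<le> zV z $ j" "AE z\<in>A in P. 0 \<le> zV z $ j * zE z $ j * zS z"
    using nonneg by (auto elim: eventually_mono)
  note to_nn_integral = nn_set_integral_eq_set_integral[OF V_integrable this(1)]
    nn_set_integral_eq_set_integral[OF VES_integrable this(2)]
  have "ennreal (\<integral>z\<in>A. zW z $ j \<partial>P) = (\<integral>\<^sup>+z\<in>A. zV z $ j * zE z $ j * zS z \<partial>P)"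
    using to_nn_integral by (simp add: model_set_integral_W_eq_VES[OF assms])
  also have "\<dots> = (\<integral>\<^sup>+z. indicator A z * ennreal (zV z $ j) * ennreal (zE z $ j) * ennreal (zS z) \<partial>P)"
    using nonneg by (intro nn_integral_cong_AE) (auto simp: ennreal_mult mult_ac)
  also have "\<dots> = (\<integral>\<^sup>+z. indicator A z * ennreal (zV z $ j) \<partial>P) * (\<integral>\<^sup>+z. zE z $ j \<partial>P) * (\<integral>\<^sup>+z. zS z \<partial>P)"
    using factor by simp
  also have "(\<integral>\<^sup>+z. indicator A z * ennreal (zV z $ j) \<partial>P) = ennreal (\<integral>z\<in>A. zV z $ j \<partial>P)"
    using to_nn_integral by (simp add: mult.commute)
  finally show ?thesis
    by (simp add: mult_ac)
qed

lemma model_set_integral_V_proportional: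
  fixes P :: "('J::finite, 'p::finite) sample measure"
  assumes "model P"
  obtains d where "\<And>A. A \<in> sets (sigAX P) \<Longrightarrow> (\<integral>z\<in>A. zV z $ j \<partial>P) = d * (\<integral>z\<in>A. zW z $ j \<partial>P)"
proof (rule ennreal_eq_mult_const_imp_proportional[where I="sets (sigAX P)"
    and v="\<lambda>A. \<integral>z\<in>A. zV z $ j \<partial>P" and w="\<lambda>A. \<integral>z\<in>A. zW z $ j \<partial>P"])
  have [measurable_cong]: "sets P = sets borel" and "prob_space P"
    and pos: "AE z in P. 0 < zS z \<and> 0 < zE z $ j"
    and nonneg: "AE z in P. 0 \<le> zW z $ j \<and> 0 \<le> zV z $ j"
    using assms unfolding model_def by (auto elim: AE_mp)
  interpret prob_space P by fact
  have "(\<integral>\<^sup>+z. zE z $ j \<partial>P) \<noteq> 0" "(\<integral>\<^sup>+z. zS z \<partial>P) \<noteq> 0"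
    using pos by (intro nn_integral_neq_0_AE_pos; auto elim: eventually_mono)+
  then show "(\<integral>\<^sup>+z. zE z $ j \<partial>P) * (\<integral>\<^sup>+z. zS z \<partial>P) \<noteq> 0"
    by simp
  show "0 \<le> (\<integral>z\<in>A. zV z $ j \<partial>P)" "0 \<le> (\<integral>z\<in>A. zW z $ j \<partial>P)" for A
    unfolding set_lebesgue_integral_def
    by (intro integral_nonneg_AE, use nonneg in \<open>eventually_elim, simp\<close>)+
qed (use model_set_integral_W_factor[OF assms] that in auto)

definition sigX_obs :: "('J::finite, 'p::finite) observed measure \<Rightarrow> ('J, 'p) observed measure"
  where "sigX_obs Q = vimage_algebra (space Q) (\<lambda>y. snd (snd y)) borel"

definition regW :: "('J::finite, 'p::finite) observed measure \<Rightarrow> 'J \<Rightarrow> real \<Rightarrow> ('J, 'p) observed \<Rightarrow> real"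
  where "regW Q j a y =
    real_cond_exp Q (sigX_obs Q) (\<lambda>y. fst y $ j * indicator {a} (fst (snd y))) y
    / real_cond_exp Q (sigX_obs Q) (\<lambda>y. indicator {a} (fst (snd y))) y"

lemma model_real_cond_exp_sigX_obs:
  fixes P :: "('J::finite, 'p::finite) sample measure" and f :: "('J, 'p) observed \<Rightarrow> real"
  assumes "model P" and [measurable]: "f \<in> borel_measurable borel"
    and "integrable P (\<lambda>z. f (zObs z))"
  shows "AE z in P. real_cond_exp P (sigX P) (\<lambda>z. f (zObs z)) z
    = real_cond_exp (distr P borel zObs) (sigX_obs (distr P borel zObs)) f (zObs z)"
proof -
  have [measurable_cong]: "sets P = sets borel" and "finite_measure P"
    using assms(1) unfolding model_def by (auto simp: prob_space.finite_measure)
  moreover have "sigX P = vimage_algebra (space P) (\<lambda>z. snd (snd (zObs z))) borel"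
    by (simp add: sigX_def zObs_def zX_def[abs_def])
  ultimately show ?thesis
    using real_cond_exp_distr[of P zObs borel "\<lambda>y. snd (snd y)" borel f] assms(3)
    by (simp add: sigX_obs_def integrable_distr_eq)
qed

lemma model_real_cond_exp_sigX_V_proportional:
  fixes P :: "('J::finite, 'p::finite) sample measure"
  assumes "model P"
  obtains d where "\<And>a. AE z in P. real_cond_exp P (sigX P) (\<lambda>z. zV z $ j * indicator {z. zA z = a} z) z
    = d * real_cond_exp P (sigX P) (\<lambda>z. zW z $ j * indicator {z. zA z = a} z) z"
proof -
  obtain d where d: "\<And>A. A \<in> sets (sigAX P) \<Longrightarrow> (\<integral>z\<in>A. zV z $ j \<partial>P) = d * (\<integral>z\<in>A. zW z $ j \<partial>P)"
    using model_set_integral_V_proportional[OF assms, where j=j] by blast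
  have [measurable_cong]: "sets P = sets borel" and "finite_measure P"
    and W_integrable: "integrable P (\<lambda>z. zW z $ j)"
    and V_integrable: "integrable P (\<lambda>z. zV z $ j)"
    using assms unfolding model_def by (auto simp: prob_space.finite_measure)
  interpret sigma_finite_subalgebra P "sigX P"
    unfolding sigX_def using \<open>finite_measure P\<close> by (rule sigma_finite_subalgebra_vimage_algebra) simp
  show ?thesis
  proof (rule that, rule real_cond_exp_eq_cmult)
    fix a B
    define Aa :: "('J, 'p) sample set" where "Aa = {z. zA z = a}"
    assume "B \<in> sets (sigX P)"
    then obtain C where C: "C \<in> sets borel" and B: "B = zX -` C \<inter> space P"
      unfolding sigX_def by (subst (asm) sets_vimage_algebra2) auto
    have "B \<inter> Aa = (\<lambda>z. (zA z, zX z)) -` ({a} \<times> C) \<inter> space P"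
      by (auto simp: B Aa_def)
    moreover have "{a} \<times> C \<in> sets borel"
      using C by (intro borel_Times) auto
    ultimately have "B \<inter> Aa \<in> sets (sigAX P)"
      unfolding sets_sigAX by blast
    from d[OF this] show "(\<integral>z\<in>B. zV z $ j * indicator Aa z \<partial>P) = d * (\<integral>z\<in>B. zW z $ j * indicator Aa z \<partial>P)"
      by (simp add: set_lebesgue_integral_def indicator_inter_arith mult_ac)
  qed (use V_integrable W_integrable in \<open>auto intro: integrable_real_mult_indicator\<close>)
qed

lemma model_regV_eq_cmult_regW:
  fixes P :: "('J::finite, 'p::finite) sample measure"
  assumes "model P"
  obtains d where "\<And>a. AE z in P. regV P j a z = d * regW (distr P borel zObs) j a (zObs z)"
proof -
  obtain d where d: "\<And>a. AE z in P. real_cond_exp P (sigX P) (\<lambda>z. zV z $ j * indicator {z. zA z = a} z) z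
    = d * real_cond_exp P (sigX P) (\<lambda>z. zW z $ j * indicator {z. zA z = a} z) z"
    using model_real_cond_exp_sigX_V_proportional[OF assms, where j=j] by blast
  have [measurable_cong]: "sets P = sets borel" and P: "finite_measure P"
    and W_integrable: "integrable P (\<lambda>z. zW z $ j)"
    using assms unfolding model_def by (auto simp: prob_space.finite_measure)
  show ?thesis
  proof (rule that)
    fix a
    define Aa :: "('J, 'p) sample set" where "Aa = {z. zA z = a}"
    have [measurable]: "Aa \<in> sets P"
      unfolding Aa_def by measurable
    have W_obs: "(\<lambda>z. zW z $ j * indicator Aa z) = (\<lambda>z. fst (zObs z) $ j * indicator {a} (fst (snd (zObs z))))"
      and A_obs: "indicator Aa = (\<lambda>z. indicator {a} (fst (snd (zObs z))) :: real)"
      by (auto simp: Aa_def zObs_def zW_def zA_def split: split_indicator)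
    have "AE z in P. real_cond_exp P (sigX P) (\<lambda>z. zW z $ j * indicator Aa z) z
        = real_cond_exp (distr P borel zObs) (sigX_obs (distr P borel zObs))
            (\<lambda>y. fst y $ j * indicator {a} (fst (snd y))) (zObs z)"
      unfolding W_obs using assms W_integrable
      by (intro model_real_cond_exp_sigX_obs) (simp_all add: integrable_real_mult_indicator flip: W_obs)
    moreover have "AE z in P. real_cond_exp P (sigX P) (indicator Aa) z
        = real_cond_exp (distr P borel zObs) (sigX_obs (distr P borel zObs))
            (\<lambda>y. indicator {a} (fst (snd y))) (zObs z)"
      unfolding A_obs using assms
      by (intro model_real_cond_exp_sigX_obs)
        (simp_all add: integrable_real_indicator finite_measure.emeasure_finite[OF P] less_top[symmetric] flip: A_obs)
    ultimately show "AE z in P. regV P j a z = d * regW (distr P borel zObs) j a (zObs z)"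
      using d[of a] unfolding regV_def regW_def Aa_def[symmetric] by eventually_elim simp
  qed
qed

definition Psi2_obs :: "('J::finite, 'p::finite) observed measure \<Rightarrow> 'J \<Rightarrow> real"
  where "Psi2_obs Q j = ln ((\<integral>y. regW Q j 1 y \<partial>Q) / (\<integral>y. regW Q j 0 y \<partial>Q))"

lemma Psi2_eq_Psi2_obs:
  fixes P :: "('J::finite, 'p::finite) sample measure"
  assumes "model P" and "Psi2_well_defined P j"
  shows "Psi2 P j = Psi2_obs (distr P borel zObs) j"
proof -
  define Q where "Q = distr P borel zObs"
  obtain d where d: "\<And>a. AE z in P. regV P j a z = d * regW Q j a (zObs z)"
    using model_regV_eq_cmult_regW[OF assms(1), where j=j] unfolding Q_def by blast
  have [measurable_cong]: "sets P = sets borel"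
    using assms(1) by (simp add: model_def)
  have regW_measurable [measurable]: "regW Q j a \<in> borel_measurable borel" for a
    unfolding regW_def sigX_obs_def Q_def by measurable
  have integral_regV: "(\<integral>z. regV P j a z \<partial>P) = d * (\<integral>y. regW Q j a y \<partial>Q)" for a
  proof -
    have "(\<integral>z. regV P j a z \<partial>P) = (\<integral>z. d * regW Q j a (zObs z) \<partial>P)"
      using d by (intro integral_cong_AE) (simp_all add: regV_def)
    also have "\<dots> = d * (\<integral>y. regW Q j a y \<partial>Q)"
      unfolding Q_def by (simp add: integral_distr regW_measurable[unfolded Q_def])
    finally show ?thesis .
  qed
  have "d \<noteq> 0"
    using assms(2) integral_regV[of 0] unfolding Psi2_well_defined_def by auto
  then show ?thesis
    unfolding Psi2_def Psi2_obs_def Q_def[symmetric] integral_regV by simp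
qed

theorem mainTheorem3:
  fixes P1 P2 :: "((real^'J) \<times> real \<times> (real^'p) \<times> (real^'J) \<times> (real^'J) \<times> real) measure"
    and j :: 'J
  assumes "model P1" and "model P2"
    and "Psi2_well_defined P1 j" and "Psi2_well_defined P2 j"
    and "distr P1 borel zObs = distr P2 borel zObs"
  shows "Psi2 P1 j = Psi2 P2 j"
proof -
  have "Psi2 P1 j = Psi2_obs (distr P1 borel zObs) j"
    by (rule Psi2_eq_Psi2_obs[OF assms(1,3)])
  also have "\<dots> = Psi2_obs (distr P2 borel zObs) j"
    by (simp only: assms(5))
  also have "\<dots> = Psi2 P2 j"
    by (rule Psi2_eq_Psi2_obs[OF assms(2,4), symmetric])
  finally show ?thesis .
qed

end
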